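(* Every (one-sided) infinite word that contains no $3$-antipower as a factor contains at most two distinct letters.
   Context: A $3$-antipower is a finite word $u_1u_2u_3$ with $|u_1|=|u_2|=|u_3|$ and $u_1,u_2,u_3$ pairwise distinct; a factor is a contiguous subword. *)

theory Defs
  imports Main
begin

definition is_3_antipower :: "'a list \<Rightarrow> bool" where
  "is_3_antipower w \<longleftrightarrow> (\<exists>u1 u2 u3. w = u1 @ u2 @ u3 \<and>
     length u1 = length u2 \<and> length u2 = length u3 \<and>
     u1 \<noteq> u2 \<and> u1 \<noteq> u3 \<and> u2 \<noteq> u3)"

definition factor :: "(nat \<Rightarrow> 'a) \<Rightarrow> nat \<Rightarrow> nat \<Rightarrow> 'a list" where
  "factor x i n = map x [i..<i + n]"

end

theory Submission
  imports Defs
begin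

text \<open>Suppose the word contains three distinct letters and look at the first occurrence of a third
letter c. Just before it sits a factor a b^k c with a, b, c pairwise distinct and k \<ge> 1.
For k \<noteq> 2 take m = (k + 1) div 2 and r = (k + 1) mod 2, so that k + 1 = 2m + r and r < m:
the three blocks of length m starting at a are pairwise distinct, since the first starts with a
and the second with b, while at offset r the first two blocks read a or b and the third reads c.
For k = 2 a short case analysis on the three letters following a b b c produces an antipower.\<close>

lemma length_factor [simp]: "length (factor x s m) = m"
  by (simp add: factor_def)

lemma nth_factor: "r < m \<Longrightarrow> factor x s m ! r = x (s + r)"
  by (simp add: factor_def)

lemma factor_add: "factor x s (m + n) = factor x s m @ factor x (s + m) n"
proof -
  have "[s..<s + (m + n)] = [s..<s + m] @ [s + m..<s + m + n]"
    using upt_add_eq_append[of s "s + m" n] by (simp add: add.assoc)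
  then show ?thesis
    unfolding factor_def by (simp add: add.assoc)
qed

lemma factor_neqI: "r < m \<Longrightarrow> x (s + r) \<noteq> x (t + r) \<Longrightarrow> factor x s m \<noteq> factor x t m"
  by (metis nth_factor)

lemma is_3_antipower_factorI:
  assumes "r1 < m" "x (s + r1) \<noteq> x (s + m + r1)"
    and "r2 < m" "x (s + r2) \<noteq> x (s + 2 * m + r2)"
    and "r3 < m" "x (s + m + r3) \<noteq> x (s + 2 * m + r3)"
  shows "is_3_antipower (factor x s (3 * m))"
proof -
  have "factor x s (3 * m) = factor x s m @ factor x (s + m) m @ factor x (s + 2 * m) m"
    using factor_add[of x s m "m + m"] factor_add[of x "s + m" m m]
    by (simp add: numeral_3_eq_3 mult_2 add.assoc)
  moreover have "factor x s m \<noteq> factor x (s + m) m" "factor x s m \<noteq> factor x (s + 2 * m) m"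
    "factor x (s + m) m \<noteq> factor x (s + 2 * m) m"
    using factor_neqI[OF assms(1,2)] factor_neqI[OF assms(3,4)] factor_neqI[OF assms(5,6)]
    by simp_all
  ultimately show ?thesis
    unfolding is_3_antipower_def by fastforce
qed

lemma is_3_antipower_factor_run:
  assumes "1 \<le> k" "k \<noteq> 2"
    and "x p \<noteq> b" "\<forall>j\<in>{p<..p + k}. x j = b"
    and "x (p + k + 1) \<noteq> x p" "x (p + k + 1) \<noteq> b"
  shows "is_3_antipower (factor x p (3 * ((k + 1) div 2)))"
proof -
  define m where "m = (k + 1) div 2"
  define r where "r = (k + 1) mod 2"
  have split: "k + 1 = 2 * m + r" and "r < m" and "1 \<le> m"
    using assms(1,2) unfolding m_def r_def by presburger+
  have "x (p + m) = b" "x (p + m + r) = b"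
    using assms(4) split \<open>1 \<le> m\<close> \<open>r < m\<close> by auto
  moreover have "x (p + r) \<in> {x p, b}"
    using assms(1,4) \<open>r < m\<close> split by (cases "r = 0") auto
  moreover have "x (p + 2 * m + r) = x (p + k + 1)"
    by (metis add.assoc split)
  ultimately show ?thesis
    unfolding m_def[symmetric]
    using is_3_antipower_factorI[of 0 m x p r r] \<open>r < m\<close> \<open>1 \<le> m\<close> assms(3,5,6) by auto
qed

lemma exists_3_antipower_factor_abbc:
  assumes "x p \<noteq> b" "x (p + 1) = b" "x (p + 2) = b"
    and "x (p + 3) \<noteq> x p" "x (p + 3) \<noteq> b"
  shows "\<exists>s n. is_3_antipower (factor x s n)"
proof -
  define a c where "a = x p" and "c = x (p + 3)"
  have abbc: "x p = a" "x (p + 1) = b" "x (p + 2) = b" "x (p + 3) = c"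
    and distinct: "a \<noteq> b" "c \<noteq> a" "c \<noteq> b"
    using assms unfolding a_def c_def by auto
  consider "x (p + 4) \<notin> {b, c}" | "x (p + 4) = c" | "x (p + 4) = b" "x (p + 5) \<noteq> c"
    | "x (p + 4) = b" "x (p + 5) = c" "x (p + 6) \<noteq> b"
    | "x (p + 4) = b" "x (p + 5) = c" "x (p + 6) = b"
    by blast
  \<comment> \<open>The antipowers, by case: b|c|d, ab|bc|c_, ab|bc|b_, bb|cb|c_ and abb|cbc|b__.\<close>
  then show ?thesis
  proof cases
    case 1
    then have "is_3_antipower (factor x (p + 2) (3 * 1))"
      using abbc distinct by (intro is_3_antipower_factorI[of 0]) (auto simp: eval_nat_numeral)
    then show ?thesis by blast
  next
    case 2
    then have "is_3_antipower (factor x p (3 * 2))"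
      using abbc distinct by (intro is_3_antipower_factorI[of 0 _ _ _ 0 0]) (auto simp: eval_nat_numeral)
    then show ?thesis by blast
  next
    case 3
    then have "is_3_antipower (factor x p (3 * 2))"
      using abbc distinct by (intro is_3_antipower_factorI[of 0 _ _ _ 0 1]) (auto simp: eval_nat_numeral)
    then show ?thesis by blast
  next
    case 4
    then have "is_3_antipower (factor x (p + 1) (3 * 2))"
      using abbc distinct by (intro is_3_antipower_factorI[of 0 _ _ _ 0 1]) (auto simp: eval_nat_numeral)
    then show ?thesis by blast
  next
    case 5
    then have "is_3_antipower (factor x p (3 * 3))"
      using abbc distinct by (intro is_3_antipower_factorI[of 0 _ _ _ 0 0]) (auto simp: eval_nat_numeral)
    then show ?thesis by blast
  qed
qed

lemma obtain_last_differing_position: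
  fixes x :: "nat \<Rightarrow> 'a"
  assumes "q < n" "x q \<noteq> b" "x n = b"
  obtains p where "p < n" "x p \<noteq> b" "\<forall>j\<in>{p<..n}. x j = b"
proof -
  define P where "P = {i. i < n \<and> x i \<noteq> b}"
  have "finite P"
    unfolding P_def by (rule finite_subset[of _ "{..<n}"]) auto
  moreover have "q \<in> P"
    using assms unfolding P_def by simp
  ultimately have "Max P \<in> P"
    using Max_in by auto
  have above_Max: "x j = b" if "Max P < j" "j < n" for j
  proof (rule ccontr)
    assume "x j \<noteq> b"
    then have "j \<in> P"
      using \<open>j < n\<close> unfolding P_def by simp
    then show False
      using Max_ge[OF \<open>finite P\<close>] \<open>Max P < j\<close> by (simp add: leD)
  qed
  show ?thesis
  proof (rule that)
    show "Max P < n" "x (Max P) \<noteq> b"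
      using \<open>Max P \<in> P\<close> unfolding P_def by simp_all
    show "\<forall>j\<in>{Max P<..n}. x j = b"
    proof
      fix j
      assume "j \<in> {Max P<..n}"
      then show "x j = b"
        using above_Max[of j] assms(3) by (cases "j = n") auto
    qed
  qed
qed

lemma obtain_first_fresh_letter:
  assumes "x i \<noteq> x j" "x i \<noteq> x l" "x j \<noteq> x l"
  obtains n q where "q < n" "x q \<noteq> x n" "x (Suc n) \<notin> x ` {..n}"
proof -
  have "\<exists>j. x j \<noteq> x 0"
    using assms by metis
  define j0 where "j0 = (LEAST j. x j \<noteq> x 0)"
  have "x j0 \<noteq> x 0" "\<forall>j<j0. x j = x 0"
    unfolding j0_def using LeastI_ex[OF \<open>\<exists>j. x j \<noteq> x 0\<close>] not_less_Least by auto
  have "\<exists>n. x n \<notin> {x 0, x j0}"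
    using assms by (metis insertE singletonD)
  define N where "N = (LEAST n. x n \<notin> {x 0, x j0})"
  have fresh: "x N \<notin> {x 0, x j0}" and old: "\<forall>i<N. x i \<in> {x 0, x j0}"
    unfolding N_def using LeastI_ex[OF \<open>\<exists>n. x n \<notin> {x 0, x j0}\<close>] not_less_Least by auto
  have "j0 < N"
  proof (rule ccontr)
    assume "\<not> j0 < N"
    then have "N < j0 \<or> N = j0"
      by auto
    then show False
      using fresh \<open>\<forall>j<j0. x j = x 0\<close> by auto
  qed
  then obtain n where N: "N = Suc n" and "j0 \<le> n"
    by (cases N) auto
  obtain q where "q \<in> {0, j0}" "x q \<noteq> x n"
    using \<open>x j0 \<noteq> x 0\<close> by (cases "x 0 = x n") auto
  then have "q < n"
    using \<open>j0 \<le> n\<close> le_neq_implies_less by fastforce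
  moreover have "x (Suc n) \<notin> x ` {..n}"
    using fresh old N by (auto simp: less_Suc_eq_le)
  ultimately show ?thesis
    using that \<open>x q \<noteq> x n\<close> by blast
qed

lemma exists_3_antipower_factor_if_three_letters:
  assumes "x i \<noteq> x j" "x i \<noteq> x l" "x j \<noteq> x l"
  shows "\<exists>s n. is_3_antipower (factor x s n)"
proof -
  obtain n q where "q < n" "x q \<noteq> x n" and fresh: "x (Suc n) \<notin> x ` {..n}"
    by (rule obtain_first_fresh_letter[OF assms])
  define b where "b = x n"
  have "x q \<noteq> b" "x n = b"
    using \<open>x q \<noteq> x n\<close> unfolding b_def by simp_all
  then obtain p where "p < n" "x p \<noteq> b" and run: "\<forall>j\<in>{p<..n}. x j = b"
    by (rule obtain_last_differing_position[OF \<open>q < n\<close>])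
  define k where "k = n - p"
  have "1 \<le> k" and run_k: "\<forall>j\<in>{p<..p + k}. x j = b"
    using \<open>p < n\<close> run unfolding k_def by auto
  have "x (p + k + 1) \<noteq> x p" "x (p + k + 1) \<noteq> b"
    using fresh \<open>p < n\<close> unfolding k_def b_def by auto
  show ?thesis
  proof (cases "k = 2")
    case True
    have "x (p + 1) = b" "x (p + 2) = b"
      using run_k True by auto
    moreover have "x (p + 3) \<noteq> x p" "x (p + 3) \<noteq> b"
      using \<open>x (p + k + 1) \<noteq> x p\<close> \<open>x (p + k + 1) \<noteq> b\<close> True
      by (simp_all add: eval_nat_numeral)
    ultimately show ?thesis
      by (rule exists_3_antipower_factor_abbc[of x p b, OF \<open>x p \<noteq> b\<close>])
  next
    case False
    then show ?thesis
      using is_3_antipower_factor_run[of k x p b, OF \<open>1 \<le> k\<close> False \<open>x p \<noteq> b\<close> run_k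
          \<open>x (p + k + 1) \<noteq> x p\<close> \<open>x (p + k + 1) \<noteq> b\<close>]
      by blast
  qed
qed

lemma finite_card_le_2_if_no_three_distinct:
  assumes "\<forall>a\<in>A. \<forall>b\<in>A. \<forall>c\<in>A. a = b \<or> a = c \<or> b = c"
  shows "finite A \<and> card A \<le> 2"
proof -
  obtain a b where "A \<subseteq> {a, b}"
  proof (cases "A = {}")
    case False
    then obtain a where "a \<in> A" by blast
    show ?thesis
    proof (cases "A \<subseteq> {a}")
      case False
      then obtain b where "b \<in> A" "b \<noteq> a" by blast
      then show ?thesis
        using that[of a b] assms \<open>a \<in> A\<close> by blast
    qed (use that in blast)
  qed (use that in blast)
  moreover have "card {a, b} \<le> 2"
    by (simp add: card_insert_if)
  ultimately show ?thesis
    using card_mono[of "{a, b}" A] finite_subset[of A "{a, b}"] by auto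
qed

theorem corollary10:
  fixes x :: "nat \<Rightarrow> 'a"
  assumes "\<forall>i n. \<not> is_3_antipower (factor x i n)"
  shows "finite (range x) \<and> card (range x) \<le> 2"
proof (rule finite_card_le_2_if_no_three_distinct)
  show "\<forall>a\<in>range x. \<forall>b\<in>range x. \<forall>c\<in>range x. a = b \<or> a = c \<or> b = c"
    using exists_3_antipower_factor_if_three_letters assms by blast
qed

end
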